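(* Let $\mathcal H$ be a 3-dimensional Hilbert space with orthonormal basis $|1,1\rangle,|2,1\rangle,|2,2\rangle$, let $E_1<E_2$ be real, and let $$H_0=E_1|1,1\rangle\langle1,1|+E_2\big(|2,1\rangle\langle2,1|+|2,2\rangle\langle2,2|\big),\qquad iH_I=d_1x_{11,21}+d_2x_{11,22},$$ with real $d_1,d_2$ not both zero. Then the real Lie algebra $L_0$ generated by $iH_0$ and $iH_I$ is 4-dimensional and isomorphic to $\mathfrak{su}(2)\oplus\mathfrak{u}(1)$; in particular $L_0$ does not contain $\mathfrak{su}(3)$, so the system with Hamiltonian $H_0+f(t)H_I$ is not completely controllable.
   Context: $x_{11,2k}=i\big(|1,1\rangle\langle2,k|+|2,k\rangle\langle1,1|\big)$ for $k=1,2$. The system with Hamiltonian $H_0+f(t)H_I$ ($f$ a real control field) is called completely controllable if the Lie algebra generated by $iH_0$ and $iH_I$ contains $\mathfrak{su}(3)$. *)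

theory Defs
  imports "HOL-Analysis.Analysis"
begin

text \<open>Complex n x n matrices are represented as complex^'n^'n (a real vector space).
 For the 3-level system the basis |1,1>, |2,1>, |2,2> is indexed by 0, 1, 2 :: 3.\<close>

definition ketbra :: "'n::finite \<Rightarrow> 'n \<Rightarrow> complex^'n^'n" where
  "ketbra a b = (\<chi> i j. if i = a \<and> j = b then 1 else 0)"

definition cscale :: "complex \<Rightarrow> complex^'n^'m \<Rightarrow> complex^'n^'m" where
  "cscale c M = (\<chi> i j. c * M $ i $ j)"

definition mcomm :: "complex^'n^'n \<Rightarrow> complex^'n^'n \<Rightarrow> complex^'n^'n" where
  "mcomm A B = A ** B - B ** A"

definition lie_gen :: "(complex^'n^'n) set \<Rightarrow> (complex^'n^'n) set" where
  "lie_gen S = \<Inter>{L. subspace L \<and> S \<subseteq> L \<and> (\<forall>A\<in>L. \<forall>B\<in>L. mcomm A B \<in> L)}"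

definition su :: "(complex^'n::finite^'n) set" where
  "su = {A. (\<forall>i j. A $ i $ j = - cnj (A $ j $ i)) \<and> (\<Sum>i\<in>UNIV. A $ i $ i) = 0}"

text \<open>u(1): skew-Hermitian 1x1 matrices, i.e. purely imaginary numbers (abelian).\<close>
definition u1 :: "complex set" where
  "u1 = {c. Re c = 0}"

definition su2_u1 :: "((complex^2^2) \<times> complex) set" where
  "su2_u1 = su \<times> u1"

definition su2_u1_bracket :: "(complex^2^2) \<times> complex \<Rightarrow> (complex^2^2) \<times> complex \<Rightarrow> (complex^2^2) \<times> complex" where
  "su2_u1_bracket p q = (mcomm (fst p) (fst q), 0)"

definition lie_iso_to :: "(complex^'n^'n \<Rightarrow> 'b::real_vector) \<Rightarrow> (complex^'n^'n) set \<Rightarrow> 'b set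
    \<Rightarrow> ('b \<Rightarrow> 'b \<Rightarrow> 'b) \<Rightarrow> bool" where
  "lie_iso_to \<phi> L M br \<longleftrightarrow> bij_betw \<phi> L M \<and>
     (\<forall>x\<in>L. \<forall>y\<in>L. \<forall>a b::real. \<phi> (a *\<^sub>R x + b *\<^sub>R y) = a *\<^sub>R \<phi> x + b *\<^sub>R \<phi> y) \<and>
     (\<forall>x\<in>L. \<forall>y\<in>L. \<phi> (mcomm x y) = br (\<phi> x) (\<phi> y))"

definition H0 :: "real \<Rightarrow> real \<Rightarrow> complex^3^3" where
  "H0 E1 E2 = E1 *\<^sub>R ketbra 0 0 + E2 *\<^sub>R (ketbra 1 1 + ketbra 2 2)"

definition xgen :: "3 \<Rightarrow> complex^3^3" where
  "xgen k = cscale \<i> (ketbra 0 k + ketbra k 0)"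

definition iHI :: "real \<Rightarrow> real \<Rightarrow> complex^3^3" where
  "iHI d1 d2 = d1 *\<^sub>R xgen 1 + d2 *\<^sub>R xgen 2"

definition completely_controllable :: "complex^'n^'n \<Rightarrow> complex^'n^'n \<Rightarrow> bool" where
  "completely_controllable H HI \<longleftrightarrow> su \<subseteq> lie_gen {cscale \<i> H, cscale \<i> HI}"

end

theory Submission
  imports Defs
begin

(* Write G = iH0, X = iH_I, k = E2 - E1, n = d1^2 + d2^2, and put Y = [G, X] / k, W = [X, Y] / 2.
   Then [G, Y] = -k X, [X, W] = -2n Y, [Y, W] = 2n X and [G, W] = 0, so the span of G, X, Y, W is
   closed under commutators and equals L0; it is 4-dimensional because the four matrices are
   independent once E1 \<noteq> E2 and (d1, d2) \<noteq> 0.  The element G - (k / 2n) W is central, while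
   X, Y, W span a copy of su(2); this gives L0 \<cong> su(2) \<oplus> u(1).  Finally every element of L0 has
   a purely imaginary entry at |2,1\<rangle>\<langle>2,2|, so the real rotation generator
   |2,1\<rangle>\<langle>2,2| - |2,2\<rangle>\<langle>2,1| of su(3) is not in L0. *)

lemma lie_gen_subspace: "subspace (lie_gen S)"
  unfolding lie_gen_def subspace_def by auto

lemma lie_gen_superset: "S \<subseteq> lie_gen S"
  unfolding lie_gen_def by auto

lemma lie_gen_mcomm: "A \<in> lie_gen S \<Longrightarrow> B \<in> lie_gen S \<Longrightarrow> mcomm A B \<in> lie_gen S"
  unfolding lie_gen_def by auto

lemma lie_gen_minimal:
  "subspace L \<Longrightarrow> S \<subseteq> L \<Longrightarrow> (\<And>A B. A \<in> L \<Longrightarrow> B \<in> L \<Longrightarrow> mcomm A B \<in> L) \<Longrightarrow> lie_gen S \<subseteq> L"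
  unfolding lie_gen_def by auto

lemma lie_gen_eq_range:
  fixes F :: "'c::real_vector \<Rightarrow> complex^'n^'n"
  assumes "linear F" and "S \<subseteq> range F"
    and "\<And>p p'. mcomm (F p) (F p') \<in> range F"
    and "span B = UNIV" and "F ` B \<subseteq> lie_gen S"
  shows "lie_gen S = range F"
proof
  show "lie_gen S \<subseteq> range F"
    using assms(1-3) by (intro lie_gen_minimal linear_subspace_image subspace_UNIV) auto
  have "range F = span (F ` B)"
    using linear_span_image[OF assms(1)] assms(4) by simp
  also have "\<dots> \<subseteq> lie_gen S"
    by (rule span_minimal[OF assms(5) lie_gen_subspace])
  finally show "range F \<subseteq> lie_gen S" .
qed

lemma lie_iso_to_coordinates:
  fixes F :: "'c::real_vector \<Rightarrow> complex^'n^'n" and \<Psi> :: "'c \<Rightarrow> 'b::real_vector"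
  assumes F: "linear F" "inj F" and \<Psi>: "linear \<Psi>" "bij_betw \<Psi> UNIV M"
    and F_bracket: "\<And>p p'. mcomm (F p) (F p') = F (brc p p')"
    and \<Psi>_bracket: "\<And>p p'. \<Psi> (brc p p') = br (\<Psi> p) (\<Psi> p')"
  shows "lie_iso_to (\<Psi> \<circ> inv F) (range F) M br"
  unfolding lie_iso_to_def
proof (intro conjI ballI allI)
  show "bij_betw (\<Psi> \<circ> inv F) (range F) M"
    using inj_imp_bij_betw_inv[OF F(2)] \<Psi>(2) by (rule bij_betw_trans)
next
  fix x y a b assume "x \<in> range F" "y \<in> range F"
  then obtain p p' where "x = F p" "y = F p'" by auto
  moreover have "a *\<^sub>R F p + b *\<^sub>R F p' = F (a *\<^sub>R p + b *\<^sub>R p')"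
    using F(1) by (simp add: linear_add linear_scale)
  ultimately show "(\<Psi> \<circ> inv F) (a *\<^sub>R x + b *\<^sub>R y) = a *\<^sub>R (\<Psi> \<circ> inv F) x + b *\<^sub>R (\<Psi> \<circ> inv F) y"
    using F(2) \<Psi>(1) by (simp add: linear_add linear_scale)
next
  fix x y assume "x \<in> range F" "y \<in> range F"
  then show "(\<Psi> \<circ> inv F) (mcomm x y) = br ((\<Psi> \<circ> inv F) x) ((\<Psi> \<circ> inv F) y)"
    using F(2) by (auto simp: F_bracket \<Psi>_bracket)
qed

lemma span_unit_quadruples:
  "span {(1, 0, 0, 0), (0, 1, 0, 0), (0, 0, 1, 0), (0, 0, 0, 1)} = (UNIV :: (real \<times> real \<times> real \<times> real) set)"
proof -
  let ?B = "{(1, 0, 0, 0), (0, 1, 0, 0), (0, 0, 1, 0), (0, 0, 0, 1)} :: (real \<times> real \<times> real \<times> real) set"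
  have "(a, b, c, e) \<in> span ?B" for a b c e
  proof -
    have "(a, b, c, e) = a *\<^sub>R (1, 0, 0, 0) + b *\<^sub>R (0, 1, 0, 0) + c *\<^sub>R (0, 0, 1, 0) + e *\<^sub>R (0, 0, 0, 1)"
      by simp
    then show ?thesis
      by (metis insertCI span_add span_base span_scale)
  qed
  then show ?thesis by auto
qed

(* With G = iH0, X = iH_I, Y = [G, X] / (E2 - E1) and W = [X, Y] / 2,
   L0_param E1 E2 d1 d2 (a, b, c, e) is the matrix a G + b X + c Y + e W. *)
definition L0_param :: "real \<Rightarrow> real \<Rightarrow> real \<Rightarrow> real \<Rightarrow> real \<times> real \<times> real \<times> real \<Rightarrow> complex^3^3" where
  "L0_param E1 E2 d1 d2 = (\<lambda>(a, b, c, e). \<chi> i j.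
     if i = 0 \<and> j = 0 then \<i> * of_real (a * E1 - e * (d1\<^sup>2 + d2\<^sup>2))
     else if i = 1 \<and> j = 1 then \<i> * of_real (a * E2 + e * d1\<^sup>2)
     else if i = 2 \<and> j = 2 then \<i> * of_real (a * E2 + e * d2\<^sup>2)
     else if (i = 1 \<and> j = 2) \<or> (i = 2 \<and> j = 1) then \<i> * of_real (e * d1 * d2)
     else if i = 0 \<and> j = 1 then \<i> * of_real (b * d1) + of_real (c * d1)
     else if i = 1 \<and> j = 0 then \<i> * of_real (b * d1) - of_real (c * d1)
     else if i = 0 \<and> j = 2 then \<i> * of_real (b * d2) + of_real (c * d2)
     else \<i> * of_real (b * d2) - of_real (c * d2))"

(* Structure constants of L0 in the coordinates of L0_param, with k = E2 - E1 and n = d1^2 + d2^2. *)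
definition coord_bracket ::
    "real \<Rightarrow> real \<Rightarrow> real \<times> real \<times> real \<times> real \<Rightarrow> real \<times> real \<times> real \<times> real \<Rightarrow> real \<times> real \<times> real \<times> real" where
  "coord_bracket k n = (\<lambda>(a, b, c, e) (a', b', c', e').
     (0, - k * (a * c' - c * a') + 2 * n * (c * e' - e * c'),
      k * (a * b' - b * a') - 2 * n * (b * e' - e * b'), 2 * (b * c' - c * b')))"

lemma L0_param_linear: "linear (L0_param E1 E2 d1 d2)"
proof (rule linearI)
  fix p p' :: "real \<times> real \<times> real \<times> real" and r :: real
  show "L0_param E1 E2 d1 d2 (p + p') = L0_param E1 E2 d1 d2 p + L0_param E1 E2 d1 d2 p'"
    by (cases p rule: prod_cases4, cases p' rule: prod_cases4)
      (simp add: L0_param_def vec_eq_iff forall_3 complex_eq_iff algebra_simps)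
  show "L0_param E1 E2 d1 d2 (r *\<^sub>R p) = r *\<^sub>R L0_param E1 E2 d1 d2 p"
    by (cases p rule: prod_cases4) (simp add: L0_param_def vec_eq_iff forall_3 complex_eq_iff algebra_simps)
qed

lemma L0_param_eq_0:
  assumes "E1 \<noteq> E2" and "d1 \<noteq> 0 \<or> d2 \<noteq> 0" and "L0_param E1 E2 d1 d2 (a, b, c, e) = 0"
  shows "a = 0 \<and> b = 0 \<and> c = 0 \<and> e = 0"
proof -
  have entry: "\<And>i j. L0_param E1 E2 d1 d2 (a, b, c, e) $ i $ j = 0" using assms(3) by simp
  have "b * d1 = 0" "c * d1 = 0" using entry[of 0 1] by (simp_all add: L0_param_def complex_eq_iff)
  moreover have "b * d2 = 0" "c * d2 = 0" using entry[of 0 2] by (simp_all add: L0_param_def complex_eq_iff)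
  ultimately have bc: "b = 0" "c = 0" using assms(2) by auto
  have 12: "e * d1 * d2 = 0" using entry[of 1 2] by (simp add: L0_param_def complex_eq_iff)
  have 11: "a * E2 + e * d1\<^sup>2 = 0" using entry[of 1 1] by (simp add: L0_param_def complex_eq_iff)
  have 22: "a * E2 + e * d2\<^sup>2 = 0" using entry[of 2 2] by (simp add: L0_param_def complex_eq_iff)
  have 00: "a * E1 - e * (d1\<^sup>2 + d2\<^sup>2) = 0" using entry[of 0 0] by (simp add: L0_param_def complex_eq_iff)
  have e: "e = 0"
  proof (rule ccontr)
    assume "e \<noteq> 0"
    then have "d1 * d2 = 0" "d1\<^sup>2 = d2\<^sup>2" using 12 11 22 by (auto simp: algebra_simps)
    then show False using assms(2) by auto
  qed
  then have "a = 0" using 11 00 assms(1) by auto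
  with bc e show ?thesis by simp
qed

lemma L0_param_inj:
  assumes "E1 \<noteq> E2" and "d1 \<noteq> 0 \<or> d2 \<noteq> 0"
  shows "inj (L0_param E1 E2 d1 d2)"
  unfolding linear_injective_0[OF L0_param_linear]
  using L0_param_eq_0[OF assms] by (metis prod_cases4 zero_prod_def)

lemma L0_param_mcomm:
  "mcomm (L0_param E1 E2 d1 d2 p) (L0_param E1 E2 d1 d2 p')
     = L0_param E1 E2 d1 d2 (coord_bracket (E2 - E1) (d1\<^sup>2 + d2\<^sup>2) p p')"
proof (cases p rule: prod_cases4, cases p' rule: prod_cases4)
  fix a b c e a' b' c' e' assume "p = (a, b, c, e)" "p' = (a', b', c', e')"
  then show ?thesis
    unfolding mcomm_def L0_param_def coord_bracket_def
    apply (simp add: vec_eq_iff forall_3 sum_3 matrix_matrix_mult_def)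
    apply (simp add: complex_eq_iff algebra_simps power2_eq_square)
    done
qed

lemma iH0_eq_L0_param: "cscale \<i> (H0 E1 E2) = L0_param E1 E2 d1 d2 (1, 0, 0, 0)"
  unfolding cscale_def H0_def ketbra_def L0_param_def
  by (simp add: vec_eq_iff forall_3 complex_eq_iff)

lemma iHI_eq_L0_param: "iHI d1 d2 = L0_param E1 E2 d1 d2 (0, 1, 0, 0)"
  unfolding cscale_def iHI_def xgen_def ketbra_def L0_param_def
  by (simp add: vec_eq_iff forall_3 complex_eq_iff)

lemma lie_gen_H0_HI_eq_range_L0_param:
  assumes "E1 \<noteq> E2"
  shows "lie_gen {cscale \<i> (H0 E1 E2), iHI d1 d2} = range (L0_param E1 E2 d1 d2)"
proof (rule lie_gen_eq_range[OF L0_param_linear _ _ span_unit_quadruples])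
  let ?L = "lie_gen {cscale \<i> (H0 E1 E2), iHI d1 d2}" and ?F = "L0_param E1 E2 d1 d2"
  have G: "?F (1, 0, 0, 0) \<in> ?L" and X: "?F (0, 1, 0, 0) \<in> ?L"
    using lie_gen_superset[of "{cscale \<i> (H0 E1 E2), iHI d1 d2}"]
    by (simp_all add: iH0_eq_L0_param[symmetric] iHI_eq_L0_param[symmetric])
  have "(1 / (E2 - E1)) *\<^sub>R mcomm (?F (1, 0, 0, 0)) (?F (0, 1, 0, 0)) \<in> ?L"
    by (intro subspace_scale lie_gen_subspace lie_gen_mcomm G X)
  then have Y: "?F (0, 0, 1, 0) \<in> ?L"
    using assms by (simp add: L0_param_mcomm coord_bracket_def flip: linear_scale[OF L0_param_linear])
  have "(1 / 2) *\<^sub>R mcomm (?F (0, 1, 0, 0)) (?F (0, 0, 1, 0)) \<in> ?L"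
    by (intro subspace_scale lie_gen_subspace lie_gen_mcomm X Y)
  then have W: "?F (0, 0, 0, 1) \<in> ?L"
    by (simp add: L0_param_mcomm coord_bracket_def flip: linear_scale[OF L0_param_linear])
  show "?F ` {(1, 0, 0, 0), (0, 1, 0, 0), (0, 0, 1, 0), (0, 0, 0, 1)} \<subseteq> ?L"
    using G X Y W by auto
  show "{cscale \<i> (H0 E1 E2), iHI d1 d2} \<subseteq> range ?F"
    using iH0_eq_L0_param[of E1 E2 d1 d2] iHI_eq_L0_param[of d1 d2 E1 E2] by auto
  show "mcomm (?F p) (?F p') \<in> range ?F" for p p'
    by (simp add: L0_param_mcomm)
qed

lemma su_not_subset_range_L0_param: "\<not> su \<subseteq> range (L0_param E1 E2 d1 d2)"
proof
  define M :: "complex^3^3" where "M = (\<chi> i j. if i = 1 \<and> j = 2 then 1 else if i = 2 \<and> j = 1 then -1 else 0)"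
  assume "su \<subseteq> range (L0_param E1 E2 d1 d2)"
  moreover have "M \<in> su" unfolding M_def su_def by (simp add: forall_3 sum_3)
  ultimately obtain p where "M = L0_param E1 E2 d1 d2 p" by auto
  then have "Re (M $ 1 $ 2) = 0"
    by (cases p rule: prod_cases4) (simp add: L0_param_def)
  then show False by (simp add: M_def)
qed

definition su2_param :: "real \<Rightarrow> real \<Rightarrow> real \<times> real \<times> real \<times> real \<Rightarrow> complex^2^2" where
  "su2_param k q = (\<lambda>(a, b, c, e). let w = e * q\<^sup>2 + a * k / 2 in \<chi> i j.
     if i = 1 \<and> j = 1 then - \<i> * of_real w
     else if i = 2 \<and> j = 2 then \<i> * of_real w
     else if i = 1 \<and> j = 2 then - \<i> * of_real (b * q) - of_real (c * q)
     else - \<i> * of_real (b * q) + of_real (c * q))"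

definition su2_u1_param :: "real \<Rightarrow> real \<Rightarrow> real \<times> real \<times> real \<times> real \<Rightarrow> (complex^2^2) \<times> complex" where
  "su2_u1_param k q p = (su2_param k q p, \<i> * of_real (fst p))"

lemma su2_u1_param_linear: "linear (su2_u1_param k q)"
proof (rule linearI)
  fix p p' :: "real \<times> real \<times> real \<times> real" and r :: real
  show "su2_u1_param k q (p + p') = su2_u1_param k q p + su2_u1_param k q p'"
    by (cases p rule: prod_cases4, cases p' rule: prod_cases4)
      (simp add: su2_u1_param_def su2_param_def Let_def vec_eq_iff forall_2 complex_eq_iff field_simps)
  show "su2_u1_param k q (r *\<^sub>R p) = r *\<^sub>R su2_u1_param k q p"
    by (cases p rule: prod_cases4)
      (simp add: su2_u1_param_def su2_param_def Let_def vec_eq_iff forall_2 complex_eq_iff algebra_simps)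
qed

lemma su2_u1_param_bracket:
  "su2_u1_param k q (coord_bracket k (q\<^sup>2) p p') = su2_u1_bracket (su2_u1_param k q p) (su2_u1_param k q p')"
proof (cases p rule: prod_cases4, cases p' rule: prod_cases4)
  fix a b c e a' b' c' e' assume "p = (a, b, c, e)" "p' = (a', b', c', e')"
  then show ?thesis
    unfolding su2_u1_param_def su2_u1_bracket_def su2_param_def coord_bracket_def mcomm_def Let_def
    apply (simp add: vec_eq_iff forall_2 sum_2 matrix_matrix_mult_def)
    apply (simp add: complex_eq_iff algebra_simps power2_eq_square)
    done
qed

lemma su2_param_su: "su2_param k q p \<in> su"
  by (cases p rule: prod_cases4) (simp add: su2_param_def Let_def su_def forall_2 sum_2 complex_eq_iff)

lemma su_eq_su2_param:
  assumes "A \<in> su" and "q > 0"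
  shows "A = su2_param k q (a, - Im (A$1$2) / q, - Re (A$1$2) / q, (- Im (A$1$1) - a * k / 2) / q\<^sup>2)"
proof -
  have skew: "A$i$j = - cnj (A$j$i)" for i j
    using assms(1) unfolding su_def by blast
  have trace: "A$1$1 + A$2$2 = 0"
    using assms(1) unfolding su_def sum_2 by blast
  have "Re (A$1$1) = 0" using skew[of 1 1] by (simp add: complex_eq_iff)
  moreover have "A$2$2 = - A$1$1" using trace by (simp add: eq_neg_iff_add_eq_0 add.commute)
  moreover have "A$2$1 = - cnj (A$1$2)" by (rule skew)
  ultimately show ?thesis
    using assms(2) by (simp add: su2_param_def Let_def vec_eq_iff forall_2 complex_eq_iff)
qed

lemma su2_u1_param_bij:
  assumes "q > 0"
  shows "bij_betw (su2_u1_param k q) UNIV su2_u1"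
proof (rule bij_betwI')
  fix p p' :: "real \<times> real \<times> real \<times> real"
  show "(su2_u1_param k q p = su2_u1_param k q p') = (p = p')"
    using assms
    by (cases p rule: prod_cases4, cases p' rule: prod_cases4)
      (auto simp: su2_u1_param_def su2_param_def Let_def vec_eq_iff forall_2 complex_eq_iff)
next
  fix p show "su2_u1_param k q p \<in> su2_u1"
    by (simp add: su2_u1_param_def su2_u1_def u1_def su2_param_su)
next
  fix y assume "y \<in> su2_u1"
  then obtain A z where y: "y = (A, z)" "A \<in> su" "Re z = 0" by (auto simp: su2_u1_def u1_def)
  let ?p = "(Im z, - Im (A$1$2) / q, - Re (A$1$2) / q, (- Im (A$1$1) - Im z * k / 2) / q\<^sup>2)"
  have "y = su2_u1_param k q ?p"
    using y su_eq_su2_param[OF y(2) assms] by (simp add: su2_u1_param_def complex_eq_iff)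
  then show "\<exists>p\<in>UNIV. y = su2_u1_param k q p" by blast
qed

theorem mainTheorem2:
  fixes E1 E2 d1 d2 :: real
  assumes "E1 < E2" and "d1 \<noteq> 0 \<or> d2 \<noteq> 0"
  defines "HI \<equiv> cscale (- \<i>) (iHI d1 d2)"
  defines "L0 \<equiv> lie_gen {cscale \<i> (H0 E1 E2), iHI d1 d2}"
  shows "dim L0 = 4
    \<and> (\<exists>\<phi>. lie_iso_to \<phi> L0 su2_u1 su2_u1_bracket)
    \<and> \<not> (su :: (complex^3^3) set) \<subseteq> L0
    \<and> \<not> completely_controllable (H0 E1 E2) HI"
proof -
  let ?F = "L0_param E1 E2 d1 d2"
  have E: "E1 \<noteq> E2" using assms(1) by simp
  have L0: "L0 = range ?F"
    unfolding L0_def by (rule lie_gen_H0_HI_eq_range_L0_param[OF E])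
  have dim: "dim L0 = 4"
    using eucl.dim_image_eq[OF L0_param_linear inj_on_subset[OF L0_param_inj[OF E assms(2)]]]
    by (simp add: L0)
  define q where "q = sqrt (d1\<^sup>2 + d2\<^sup>2)"
  have "d1\<^sup>2 + d2\<^sup>2 > 0" using assms(2) by (simp add: sum_power2_gt_zero_iff)
  then have q: "q > 0" "q\<^sup>2 = d1\<^sup>2 + d2\<^sup>2" by (simp_all add: q_def)
  have "lie_iso_to (su2_u1_param (E2 - E1) q \<circ> inv ?F) L0 su2_u1 su2_u1_bracket"
    unfolding L0 using L0_param_linear L0_param_inj[OF E assms(2)]
      su2_u1_param_linear su2_u1_param_bij[OF q(1)]
    by (rule lie_iso_to_coordinates[where brc = "coord_bracket (E2 - E1) (q\<^sup>2)"])
      (simp_all only: L0_param_mcomm[of E1 E2 d1 d2, folded q(2)] su2_u1_param_bracket)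
  moreover have "\<not> su \<subseteq> L0"
    unfolding L0 by (rule su_not_subset_range_L0_param)
  moreover have "cscale \<i> HI = iHI d1 d2"
    unfolding HI_def cscale_def by (simp add: vec_eq_iff)
  ultimately show ?thesis
    using dim unfolding completely_controllable_def L0_def by auto
qed

end
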